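(* Let $(X_1,\dots,X_M)$ have density $f\in\mathrm{MMEam}$ of the form $f(x_1,\dots,x_M)=\sum_{\mathbf i\in\mathscr S}p_{\mathbf i}f_{i_1}(x_1)\cdots f_{i_M}(x_M)$, and let $B$ be a strictly positive random variable independent of $(X_1,\dots,X_M)$ with distribution function $G$ and Laplace transform $\mathcal G(z)=\int_0^\infty e^{-zr}\,dG(r)$. Let $X_j^\dagger=X_j/B$ for $1\le j\le M$. Then for $j\in\{1,\dots,M\}$ and $x\ge0$, $$F_{X_j^\dagger}(x)=1-\sum_{\mathbf i\in\mathscr S}p_{\mathbf i}\,\alpha_{i_j}\,\mathcal G(-T_{i_j}x)\,l_{i_j},$$ where for $k\in\{1,\dots,L\}$, $\mathcal G(-T_kx)=\int_0^\infty e^{-(-T_kx)r}\,dG(r)$ (a matrix-valued integral) and $l_k=(-T_k)^{-1}t_k$.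
   Context: An ME density is a probability density on $[0,\infty)$ of the form $g(x)=\alpha e^{Tx}t$ ($\alpha$ real row vector, $T$ real square matrix, $t$ real column vector); triples are taken with all eigenvalues of $T$ having strictly negative real part, so $T$ is invertible and with $l=(-T)^{-1}t$ the survival function is $\alpha e^{Tx}l$. MMEam: fix $L,M\in\mathbb N_+$ and ME densities $f_1,\dots,f_L$ with triples $(\alpha_j,T_j,t_j)$. Let $\mathscr S=\{1,\dots,L\}^M$, $\mathbf i=(i_1,\dots,i_M)$, and real numbers $p_{\mathbf i}$ (possibly negative) with $\sum p_{\mathbf i}=1$; $f(x)=\sum_{\mathbf i}p_{\mathbf i}f_{i_1}(x_1)\cdots f_{i_M}(x_M)$ on $[0,\infty)^M$ is an MMEam density if $f\ge0$. $F_Y$ denotes the distribution function of $Y$. *)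

theory Defs
  imports "HOL-Probability.Probability" "Jordan_Normal_Form.Char_Poly"
    "Jordan_Normal_Form.Gauss_Jordan_Elimination"
begin

definition mat_exp :: "real mat \<Rightarrow> real mat" where
  "mat_exp A = mat (dim_row A) (dim_col A)
     (\<lambda>(a,b). \<Sum>n. (A ^\<^sub>m n) $$ (a,b) / fact n)"

definition ME_triple :: "real vec \<Rightarrow> real mat \<Rightarrow> real vec \<Rightarrow> bool" where
  "ME_triple \<alpha> T t \<longleftrightarrow> (\<exists>n. \<alpha> \<in> carrier_vec n \<and> T \<in> carrier_mat n n \<and> t \<in> carrier_vec n
     \<and> (\<forall>z::complex. eigenvalue (map_mat complex_of_real T) z \<longrightarrow> Re z < 0))"

definition ME_fun :: "real vec \<Rightarrow> real mat \<Rightarrow> real vec \<Rightarrow> real \<Rightarrow> real" where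
  "ME_fun \<alpha> T t x = \<alpha> \<bullet> (mat_exp (x \<cdot>\<^sub>m T) *\<^sub>v t)"

definition ME_density :: "real vec \<Rightarrow> real mat \<Rightarrow> real vec \<Rightarrow> bool" where
  "ME_density \<alpha> T t \<longleftrightarrow> ME_triple \<alpha> T t \<and> (\<forall>x\<ge>0. ME_fun \<alpha> T t x \<ge> 0)
     \<and> (ME_fun \<alpha> T t has_integral 1) {0..}"

definition ME_l :: "real mat \<Rightarrow> real vec \<Rightarrow> real vec" where
  "ME_l T t = the (mat_inverse (- T)) *\<^sub>v t"

text \<open>Index set S = {1..L}^M, with coordinates indexed by the finite type 'm.\<close>
definition idx_set :: "nat \<Rightarrow> ('m::finite \<Rightarrow> nat) set" where
  "idx_set L = Pi\<^sub>E UNIV (\<lambda>_. {1..L})"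

definition MMEam_fun :: "nat \<Rightarrow> (nat \<Rightarrow> real vec) \<Rightarrow> (nat \<Rightarrow> real mat) \<Rightarrow> (nat \<Rightarrow> real vec)
    \<Rightarrow> (('m::finite \<Rightarrow> nat) \<Rightarrow> real) \<Rightarrow> real^'m \<Rightarrow> real" where
  "MMEam_fun L \<alpha> T t p x = (\<Sum>i\<in>idx_set L. p i * (\<Prod>j\<in>UNIV. ME_fun (\<alpha> (i j)) (T (i j)) (t (i j)) (x $ j)))"

definition orthant :: "(real^'m::finite) set" where
  "orthant = {x. \<forall>j. 0 \<le> x $ j}"

text \<open>Matrix-valued Laplace transform G(Z) = \<integral> e^{-Zr} dG(r) w.r.t. the distribution \<mu> of B,
  defined entrywise.\<close>
definition mat_laplace :: "real measure \<Rightarrow> real mat \<Rightarrow> real mat" where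
  "mat_laplace \<mu> Z = mat (dim_row Z) (dim_col Z)
     (\<lambda>(a,b). \<integral>r. (mat_exp ((- r) \<cdot>\<^sub>m Z)) $$ (a,b) \<partial>\<mu>)"

end

theory Submission
  imports Defs "Jordan_Normal_Form.Schur_Decomposition" "HOL-Real_Asymp.Real_Asymp"
begin

text \<open>
  By independence, \<open>P(X\<^sub>j / B \<le> x) = \<integral> F\<^sub>j(x r) dG(r)\<close>, where \<open>F\<^sub>j\<close> is the distribution
  function of \<open>X\<^sub>j\<close>. Integrating the MMEam density over the other coordinates, where every factor
  has total mass 1, gives \<open>F\<^sub>j(z) = \<Sum>\<^sub>i p\<^sub>i (1 - \<alpha> e\<^bsup>T z\<^esup> l)\<close>, with \<open>(\<alpha>, T, t)\<close> the
  triple of the \<open>j\<close>-th factor \<open>f\<close> and \<open>l = (-T)\<^sup>-\<^sup>1 t\<close>. Indeed \<open>\<alpha> e\<^bsup>T z\<^esup> l\<close> has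
  derivative \<open>-f(z)\<close> because \<open>T l = -t\<close>, and it vanishes at infinity because \<open>T\<close> is stable
  (triangularise \<open>T\<close> over \<open>\<complex>\<close>; each triangular coordinate then obeys a scalar equation
  \<open>v' = \<lambda> v + h\<close> with \<open>Re \<lambda> < 0\<close> and \<open>h \<longrightarrow> 0\<close>), so it is the survival function of \<open>f\<close>.
  Integrating against \<open>G\<close> and moving the integral inside the finite sums and matrix products
  turns \<open>e\<^bsup>T x r\<^esup>\<close> into the matrix Laplace transform \<open>G(-T x)\<close>.
\<close>


section \<open>Entries of the matrix exponential\<close>

lemma index_mult_mat_sum:
  assumes "A \<in> carrier_mat n k" "B \<in> carrier_mat k m" "i < n" "j < m"
  shows "(A * B) $$ (i,j) = (\<Sum>c<k. A $$ (i,c) * B $$ (c,j))"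
  using assms by (auto simp: scalar_prod_def lessThan_atLeast0 intro!: sum.cong)

lemma index_mult_mat_vec_sum:
  assumes "A \<in> carrier_mat n k" "v \<in> carrier_vec k" "i < n"
  shows "(A *\<^sub>v v) $ i = (\<Sum>c<k. A $$ (i,c) * v $ c)"
  using assms by (auto simp: scalar_prod_def lessThan_atLeast0 intro!: sum.cong)

lemma scalar_prod_mult_mat_vec_sum:
  assumes "A \<in> carrier_mat n k" "u \<in> carrier_vec n" "v \<in> carrier_vec k"
  shows "u \<bullet> (A *\<^sub>v v) = (\<Sum>a<n. u $ a * (\<Sum>b<k. A $$ (a,b) * v $ b))"
  using assms by (auto simp: scalar_prod_def lessThan_atLeast0 intro!: sum.cong)

lemma sum_sum_mult_swap:
  fixes a :: "'i \<Rightarrow> 'a::comm_semiring_1"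
  shows "(\<Sum>j\<in>J. (\<Sum>l\<in>L. a l * b l j) * c j) = (\<Sum>l\<in>L. a l * (\<Sum>j\<in>J. b l j * c j))"
  by (simp add: sum_distrib_left sum_distrib_right mult.assoc) (rule sum.swap)

lemma pow_mat_smult:
  fixes A :: "'a::comm_ring_1 mat"
  assumes A: "A \<in> carrier_mat n n"
  shows "(y \<cdot>\<^sub>m A) ^\<^sub>m k = y ^ k \<cdot>\<^sub>m A ^\<^sub>m k"
proof (induction k)
  case (Suc k)
  have "(y \<cdot>\<^sub>m A) ^\<^sub>m Suc k = y ^ k \<cdot>\<^sub>m (A ^\<^sub>m k * (y \<cdot>\<^sub>m A))"
    using Suc A by (simp add: mult_smult_assoc_mat[of _ n n _ n])
  also have "A ^\<^sub>m k * (y \<cdot>\<^sub>m A) = y \<cdot>\<^sub>m A ^\<^sub>m Suc k"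
    using A by (simp add: mult_smult_distrib[of _ n n _ n])
  finally show ?case by (auto intro!: eq_matI)
qed (auto intro!: eq_matI)

lemma abs_pow_mat_index_le:
  fixes A :: "real mat"
  assumes A: "A \<in> carrier_mat n n" and "a < n" "b < n"
  shows "\<bar>(A ^\<^sub>m k) $$ (a,b)\<bar> \<le> (\<Sum>i<n. \<Sum>j<n. \<bar>A $$ (i,j)\<bar>) ^ k"
  using assms(2,3)
proof (induction k arbitrary: b)
  case (Suc k)
  define S where "S = (\<Sum>i<n. \<Sum>j<n. \<bar>A $$ (i,j)\<bar>)"
  have "\<bar>(A ^\<^sub>m Suc k) $$ (a,b)\<bar> = \<bar>\<Sum>c<n. (A ^\<^sub>m k) $$ (a,c) * A $$ (c,b)\<bar>"
    using Suc.prems A by (simp only: pow_mat.simps, subst index_mult_mat_sum[of _ n n]) auto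
  also have "\<dots> \<le> (\<Sum>c<n. S ^ k * \<bar>A $$ (c,b)\<bar>)"
    using Suc by (auto intro!: order_trans[OF sum_abs] sum_mono mult_right_mono simp: abs_mult S_def)
  also have "\<dots> \<le> S ^ k * S"
  proof -
    have "(\<Sum>c<n. \<bar>A $$ (c,b)\<bar>) \<le> S"
      unfolding S_def using Suc.prems
      by (rule_tac order_trans[OF _ sum_mono[OF member_le_sum[of b "{..<n}"]]]) auto
    then show ?thesis by (simp add: sum_distrib_left[symmetric] S_def mult_left_mono sum_nonneg)
  qed
  finally show ?case by (simp add: S_def mult.commute)
qed (use A in auto)

definition mat_exp_coeff :: "real mat \<Rightarrow> nat \<Rightarrow> nat \<Rightarrow> nat \<Rightarrow> real" where
  "mat_exp_coeff A a b k = (A ^\<^sub>m k) $$ (a,b) / fact k"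

lemma summable_mat_exp_coeff:
  assumes A: "A \<in> carrier_mat n n" and ab: "a < n" "b < n"
  shows "summable (\<lambda>k. mat_exp_coeff A a b k * y ^ k)"
proof -
  define S where "S = (\<Sum>i<n. \<Sum>j<n. \<bar>A $$ (i,j)\<bar>)"
  show ?thesis
  proof (rule summable_comparison_test'[OF summable_exp[of "S * \<bar>y\<bar>"]])
    fix k
    have "norm (mat_exp_coeff A a b k * y ^ k) \<le> S ^ k / fact k * \<bar>y\<bar> ^ k"
      using abs_pow_mat_index_le[OF A ab, of k] unfolding S_def mat_exp_coeff_def
      by (auto simp: abs_mult power_abs intro!: mult_right_mono divide_right_mono)
    then show "norm (mat_exp_coeff A a b k * y ^ k) \<le> inverse (fact k) * (S * \<bar>y\<bar>) ^ k"
      by (simp add: power_mult_distrib field_simps)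
  qed
qed

lemma mat_exp_carrier: "A \<in> carrier_mat n n \<Longrightarrow> mat_exp (y \<cdot>\<^sub>m A) \<in> carrier_mat n n"
  unfolding mat_exp_def by auto

lemma mat_exp_smult_index:
  assumes A: "A \<in> carrier_mat n n" and "a < n" "b < n"
  shows "mat_exp (y \<cdot>\<^sub>m A) $$ (a,b) = (\<Sum>k. mat_exp_coeff A a b k * y ^ k)"
  using assms by (simp add: mat_exp_def pow_mat_smult[OF A] mat_exp_coeff_def ac_simps)

lemma DERIV_mat_exp_smult_index:
  assumes A: "A \<in> carrier_mat n n" and ab: "a < n" "b < n"
  shows "((\<lambda>y. mat_exp (y \<cdot>\<^sub>m A) $$ (a,b)) has_real_derivative
           (\<Sum>c<n. mat_exp (y \<cdot>\<^sub>m A) $$ (a,c) * A $$ (c,b))) (at y)"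
proof -
  have summable: "summable (\<lambda>k. mat_exp_coeff A a c k * y ^ k * A $$ (c,b))" if "c < n" for c
    using summable_mat_exp_coeff[OF A ab(1) that] by (rule summable_mult2)
  have "diffs (mat_exp_coeff A a b) k * y ^ k = (\<Sum>c<n. mat_exp_coeff A a c k * y ^ k * A $$ (c,b))" for k
  proof -
    have "diffs (mat_exp_coeff A a b) k = (A ^\<^sub>m k * A) $$ (a,b) / fact k"
      unfolding diffs_def mat_exp_coeff_def by (simp add: fact_Suc del: index_mult_mat)
    also have "\<dots> = (\<Sum>c<n. (A ^\<^sub>m k) $$ (a,c) * A $$ (c,b)) / fact k"
      using A ab by (subst index_mult_mat_sum[of _ n n]) auto
    finally show ?thesis
      by (simp add: mat_exp_coeff_def sum_divide_distrib sum_distrib_left algebra_simps)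
  qed
  then have "(\<Sum>k. diffs (mat_exp_coeff A a b) k * y ^ k)
      = (\<Sum>k. \<Sum>c<n. mat_exp_coeff A a c k * y ^ k * A $$ (c,b))"
    by simp
  also have "\<dots> = (\<Sum>c<n. \<Sum>k. mat_exp_coeff A a c k * y ^ k * A $$ (c,b))"
    by (rule suminf_sum) (use summable in auto)
  also have "\<dots> = (\<Sum>c<n. mat_exp (y \<cdot>\<^sub>m A) $$ (a,c) * A $$ (c,b))"
    using summable_mat_exp_coeff[OF A ab(1)]
    by (intro sum.cong refl) (simp add: suminf_mult2 mat_exp_smult_index[OF A ab(1)])
  finally show ?thesis
    using termdiffs_strong_converges_everywhere[OF summable_mat_exp_coeff[OF A ab], of y]
    by (simp add: mat_exp_smult_index[OF A ab])
qed


section \<open>Decay of stable linear systems\<close>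

lemma exp_decay_of_differential_inequality:
  fixes \<phi> \<phi>' :: "real \<Rightarrow> real"
  assumes a: "a > 0"
    and deriv: "\<And>y. y \<ge> Y \<Longrightarrow> (\<phi> has_real_derivative \<phi>' y) (at y)"
    and ineq: "\<And>y. y \<ge> Y \<Longrightarrow> \<phi>' y \<le> - a * (\<phi> y - c)"
    and y: "y \<ge> Y"
  shows "\<phi> y \<le> c + exp (- a * (y - Y)) * (\<phi> Y - c)"
proof -
  define \<psi> where "\<psi> z = exp (a * z) * (\<phi> z - c)" for z
  have "\<psi> y \<le> \<psi> Y"
  proof (rule DERIV_nonpos_imp_nonincreasing[OF y])
    fix z assume z: "Y \<le> z" "z \<le> y"
    have "(\<psi> has_real_derivative exp (a * z) * (a * (\<phi> z - c) + \<phi>' z)) (at z)"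
      unfolding \<psi>_def using deriv[of z] z
      by (auto intro!: derivative_eq_intros simp: algebra_simps)
    moreover have "exp (a * z) * (a * (\<phi> z - c) + \<phi>' z) \<le> 0"
      using ineq[of z] z by (simp add: mult_nonneg_nonpos)
    ultimately show "\<exists>D. (\<psi> has_real_derivative D) (at z) \<and> D \<le> 0" by blast
  qed
  then have "\<phi> y - c \<le> exp (a * Y) / exp (a * y) * (\<phi> Y - c)"
    unfolding \<psi>_def by (simp add: field_simps)
  then show ?thesis by (simp add: exp_diff[symmetric] algebra_simps)
qed

lemma complex_ode_tendsto_zero:
  fixes v h :: "real \<Rightarrow> complex" and lam :: complex
  assumes lam: "Re lam < 0" and h: "(h \<longlongrightarrow> 0) at_top"
    and deriv: "\<And>y. (v has_vector_derivative (lam * v y + h y)) (at y)"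
  shows "(v \<longlongrightarrow> 0) at_top"
proof (rule tendstoI)
  fix \<epsilon> :: real assume \<epsilon>: "\<epsilon> > 0"
  define a where "a = - Re lam"
  have a: "a > 0" using lam by (simp add: a_def)
  define \<phi> where "\<phi> y = Re (v y)^2 + Im (v y)^2" for y
  define \<phi>' where "\<phi>' y = 2 * Re (v y) * Re (lam * v y + h y) + 2 * Im (v y) * Im (lam * v y + h y)" for y
  have \<phi>_norm: "\<phi> y = norm (v y)^2" for y by (simp add: \<phi>_def cmod_def)
  have \<phi>_deriv: "(\<phi> has_real_derivative \<phi>' y) (at y)" for y
    unfolding \<phi>_def \<phi>'_def
    by (rule derivative_eq_intros has_field_derivative_Re[OF deriv] has_field_derivative_Im[OF deriv] refl)+
      (simp add: algebra_simps)
  \<comment> \<open>\<open>|v|\<^sup>2\<close> is a Lyapunov function: \<open>(|v|\<^sup>2)' \<le> -2a|v|\<^sup>2 + 2|v||h| \<le> -a|v|\<^sup>2 + |h|\<^sup>2/a\<close>.\<close>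
  have \<phi>'_le: "\<phi>' y \<le> - a * (\<phi> y - norm (h y)^2 / a^2)" for y
  proof -
    have "\<phi>' y = - 2 * a * \<phi> y + 2 * (Re (v y) * Re (h y) + Im (v y) * Im (h y))"
      unfolding \<phi>'_def \<phi>_def a_def by (simp add: algebra_simps power2_eq_square)
    moreover have "2 * (Re (v y) * Re (h y) + Im (v y) * Im (h y)) \<le> a * \<phi> y + norm (h y)^2 / a"
    proof -
      have "0 \<le> ((a * Re (v y) - Re (h y))^2 + (a * Im (v y) - Im (h y))^2) / a"
        using a by simp
      then show ?thesis
        using a by (simp add: \<phi>_def cmod_def power2_eq_square field_simps)
    qed
    ultimately have "\<phi>' y \<le> - a * \<phi> y + norm (h y)^2 / a" by linarith
    also have "\<dots> = - a * (\<phi> y - norm (h y)^2 / a^2)"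
      using a by (simp add: power2_eq_square field_simps)
    finally show ?thesis .
  qed
  have "\<forall>\<^sub>F y in at_top. norm (h y) < a * \<epsilon> / 2"
    using tendstoD[OF h, of "a * \<epsilon> / 2"] a \<epsilon> by simp
  then obtain Y where Y: "\<And>y. y \<ge> Y \<Longrightarrow> norm (h y) < a * \<epsilon> / 2"
    by (auto simp: eventually_at_top_linorder)
  have bound: "\<phi> y \<le> \<epsilon>^2/4 + exp (- a * (y - Y)) * (\<phi> Y - \<epsilon>^2/4)" if "y \<ge> Y" for y
  proof (rule exp_decay_of_differential_inequality[OF a \<phi>_deriv _ that])
    fix z assume "z \<ge> Y"
    then have "norm (h z)^2 \<le> (a * \<epsilon> / 2)^2"
      using Y[of z] by (intro power_mono) auto
    then have "norm (h z)^2 / a^2 \<le> \<epsilon>^2/4"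
      using a by (simp add: divide_le_eq power_mult_distrib power_divide mult.commute)
    then have "a * (norm (h z)^2 / a^2) \<le> a * (\<epsilon>^2/4)"
      using a by (intro mult_left_mono) auto
    then show "\<phi>' z \<le> - a * (\<phi> z - \<epsilon>^2/4)"
      using \<phi>'_le[of z] by (simp only: right_diff_distrib mult_minus_left)
  qed
  have "((\<lambda>y. exp (- a * (y - Y)) * (\<phi> Y - \<epsilon>^2/4)) \<longlongrightarrow> 0) at_top"
    using a by real_asymp
  then have "\<forall>\<^sub>F y in at_top. exp (- a * (y - Y)) * (\<phi> Y - \<epsilon>^2/4) < \<epsilon>^2/2"
    using \<epsilon> by (auto dest!: tendstoD[of _ 0 _ "\<epsilon>^2/2"] elim: eventually_mono)
  with eventually_ge_at_top[of Y] show "\<forall>\<^sub>F y in at_top. dist (v y) 0 < \<epsilon>"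
  proof eventually_elim
    case (elim y)
    have "\<epsilon>^2 > 0" using \<epsilon> by simp
    then have "norm (v y)^2 < \<epsilon>^2"
      using bound[of y] elim unfolding \<phi>_norm by linarith
    then show ?case using \<epsilon> by (simp add: power_less_imp_less_base)
  qed
qed

lemma complex_mat_triangularizable:
  fixes A :: "complex mat"
  assumes A: "A \<in> carrier_mat n n"
  obtains P U Q where "P \<in> carrier_mat n n" "U \<in> carrier_mat n n" "Q \<in> carrier_mat n n"
    "P * Q = 1\<^sub>m n" "Q * P = 1\<^sub>m n" "A = P * U * Q" "upper_triangular U"
    "\<And>k. k < n \<Longrightarrow> eigenvalue A (U $$ (k,k))"
proof -
  obtain es where char_poly: "char_poly A = (\<Prod>a\<leftarrow>es. [:- a, 1:])"
    using char_poly_factorized[OF A] by blast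
  obtain U P Q where schur: "schur_decomposition A es = (U,P,Q)"
    by (cases "schur_decomposition A es") auto
  from schur_decomposition[OF A char_poly schur]
  have "similar_mat_wit A U P Q" and "upper_triangular U" and diag: "diag_mat U = es" by auto
  moreover have "eigenvalue A (U $$ (k,k))" if "k < n" and "U \<in> carrier_mat n n" for k
  proof -
    have "U $$ (k,k) \<in> set es" using diag that unfolding diag_mat_def by auto
    then show ?thesis
      unfolding eigenvalue_root_char_poly[OF A] char_poly
      by (auto simp: poly_prod_list prod_list_zero_iff)
  qed
  ultimately show ?thesis
    using A that unfolding similar_mat_wit_def Let_def by auto
qed

lemma linear_ode_tendsto_zero:
  fixes A :: "real mat" and w :: "real \<Rightarrow> nat \<Rightarrow> real"
  assumes A: "A \<in> carrier_mat n n"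
    and stable: "\<forall>z::complex. eigenvalue (map_mat complex_of_real A) z \<longrightarrow> Re z < 0"
    and deriv: "\<And>y i. i < n \<Longrightarrow>
      ((\<lambda>y. w y i) has_real_derivative (\<Sum>j<n. w y j * A $$ (j,i))) (at y)"
    and i: "i < n"
  shows "((\<lambda>y. w y i) \<longlongrightarrow> 0) at_top"
proof -
  define AC where "AC = map_mat complex_of_real A"
  have AC: "AC \<in> carrier_mat n n" using A by (simp add: AC_def)
  obtain P U Q where P: "P \<in> carrier_mat n n" and U: "U \<in> carrier_mat n n"
    and Q: "Q \<in> carrier_mat n n" and PQ: "P * Q = 1\<^sub>m n" and QP: "Q * P = 1\<^sub>m n"
    and APUQ: "AC = P * U * Q" and ut: "upper_triangular U"
    and diag: "\<And>k. k < n \<Longrightarrow> eigenvalue AC (U $$ (k,k))"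
    using complex_mat_triangularizable[OF AC] by blast
  have AP: "AC * P = P * U"
  proof -
    have "AC * P = P * U * (Q * P)"
      using P U Q by (simp add: APUQ assoc_mult_mat[of _ n n _ n _ n])
    then show ?thesis using P U by (simp add: QP)
  qed
  \<comment> \<open>In the coordinates \<open>v = w P\<close> the system \<open>w' = w A\<close> becomes triangular: \<open>v' = v U\<close>.\<close>
  define v where "v y k = (\<Sum>j<n. complex_of_real (w y j) * P $$ (j,k))" for y k
  have v_deriv: "((\<lambda>y. v y k) has_vector_derivative
      (U $$ (k,k) * v y k + (\<Sum>m<k. v y m * U $$ (m,k)))) (at y)" if k: "k < n" for k y
  proof -
    have "((\<lambda>y. v y k) has_vector_derivative
        (\<Sum>j<n. complex_of_real (\<Sum>l<n. w y l * A $$ (l,j)) * P $$ (j,k))) (at y)"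
      unfolding v_def
      by (intro has_vector_derivative_sum has_vector_derivative_mult_left
          has_vector_derivative_of_real deriv) auto
    also have "(\<Sum>j<n. complex_of_real (\<Sum>l<n. w y l * A $$ (l,j)) * P $$ (j,k))
        = (\<Sum>l<n. complex_of_real (w y l) * (AC * P) $$ (l,k))"
      using A P k by (simp add: AC_def sum_sum_mult_swap index_mult_mat_sum[of _ n n] del: index_mult_mat)
    also have "\<dots> = (\<Sum>l<n. complex_of_real (w y l) * (\<Sum>m<n. P $$ (l,m) * U $$ (m,k)))"
      using P U k by (intro sum.cong refl) (simp add: AP index_mult_mat_sum[of _ n n] del: index_mult_mat)
    also have "\<dots> = (\<Sum>m<n. v y m * U $$ (m,k))"
      by (simp add: v_def sum_sum_mult_swap)
    also have "\<dots> = (\<Sum>m<Suc k. v y m * U $$ (m,k))"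
      using ut U k unfolding upper_triangular_def
      by (intro sum.mono_neutral_right) auto
    finally show ?thesis by (simp add: add.commute mult.commute)
  qed
  have v_tendsto: "((\<lambda>y. v y k) \<longlongrightarrow> 0) at_top" if "k < n" for k
    using that
  proof (induction k rule: less_induct)
    case (less k)
    have "((\<lambda>y. \<Sum>m<k. v y m * U $$ (m,k)) \<longlongrightarrow> (\<Sum>m<k. 0 * U $$ (m,k))) at_top"
      using less by (intro tendsto_intros) auto
    moreover have "Re (U $$ (k,k)) < 0"
      using stable diag[OF less.prems] by (simp add: AC_def)
    ultimately show ?case
      using complex_ode_tendsto_zero v_deriv[OF less.prems] by simp
  qed
  have "complex_of_real (w y i) = (\<Sum>k<n. v y k * Q $$ (k,i))" for y
  proof -
    have "(\<Sum>k<n. v y k * Q $$ (k,i)) = (\<Sum>j<n. complex_of_real (w y j) * (P * Q) $$ (j,i))"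
      using P Q i by (simp add: v_def sum_sum_mult_swap index_mult_mat_sum[of _ n n] del: index_mult_mat)
    also have "\<dots> = complex_of_real (w y i)"
      using i by (simp add: PQ if_distrib sum.delta cong: if_cong)
    finally show ?thesis ..
  qed
  moreover have "((\<lambda>y. \<Sum>k<n. v y k * Q $$ (k,i)) \<longlongrightarrow> (\<Sum>k<n. 0 * Q $$ (k,i))) at_top"
    using v_tendsto by (intro tendsto_intros) auto
  ultimately have "((\<lambda>y. complex_of_real (w y i)) \<longlongrightarrow> 0) at_top" by simp
  from tendsto_Re[OF this] show ?thesis by simp
qed

lemma mat_exp_smult_index_tendsto_zero:
  assumes A: "A \<in> carrier_mat n n"
    and stable: "\<forall>z::complex. eigenvalue (map_mat complex_of_real A) z \<longrightarrow> Re z < 0"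
    and "a < n" "b < n"
  shows "((\<lambda>y. mat_exp (y \<cdot>\<^sub>m A) $$ (a,b)) \<longlongrightarrow> 0) at_top"
  using linear_ode_tendsto_zero[OF A stable _ \<open>b < n\<close>, of "\<lambda>y i. mat_exp (y \<cdot>\<^sub>m A) $$ (a,i)"]
    DERIV_mat_exp_smult_index[OF A \<open>a < n\<close>] by blast


section \<open>Matrix-exponential densities\<close>

lemma DERIV_scalar_prod_mat_exp:
  assumes A: "A \<in> carrier_mat n n" and u: "u \<in> carrier_vec n" and v: "v \<in> carrier_vec n"
  shows "((\<lambda>y. u \<bullet> (mat_exp (y \<cdot>\<^sub>m A) *\<^sub>v v)) has_real_derivative
           u \<bullet> (mat_exp (y \<cdot>\<^sub>m A) *\<^sub>v (A *\<^sub>v v))) (at y)"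
proof -
  have expand: "u \<bullet> (mat_exp (y \<cdot>\<^sub>m A) *\<^sub>v w)
      = (\<Sum>a<n. u $ a * (\<Sum>b<n. mat_exp (y \<cdot>\<^sub>m A) $$ (a,b) * w $ b))"
    if "w \<in> carrier_vec n" for y w
    using scalar_prod_mult_mat_vec_sum[OF mat_exp_carrier[OF A] u that] .
  have swap: "(\<Sum>b<n. (\<Sum>c<n. mat_exp (y \<cdot>\<^sub>m A) $$ (a,c) * A $$ (c,b)) * v $ b)
      = (\<Sum>c<n. mat_exp (y \<cdot>\<^sub>m A) $$ (a,c) * (A *\<^sub>v v) $ c)" for a
    unfolding sum_sum_mult_swap
    using A v by (intro sum.cong refl) (simp add: index_mult_mat_vec_sum[of _ n n] del: index_mult_mat_vec)
  have "((\<lambda>y. \<Sum>a<n. u $ a * (\<Sum>b<n. mat_exp (y \<cdot>\<^sub>m A) $$ (a,b) * v $ b)) has_real_derivative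
      (\<Sum>a<n. u $ a * (\<Sum>b<n. (\<Sum>c<n. mat_exp (y \<cdot>\<^sub>m A) $$ (a,c) * A $$ (c,b)) * v $ b))) (at y)"
    by (intro DERIV_sum DERIV_cmult DERIV_cmult_right DERIV_mat_exp_smult_index[OF A]) auto
  then show ?thesis
    unfolding expand[OF v] expand[OF mult_mat_vec_carrier[OF A v]] swap .
qed

lemma isCont_scalar_prod_mat_exp:
  assumes "A \<in> carrier_mat n n" "u \<in> carrier_vec n" "v \<in> carrier_vec n"
  shows "isCont (\<lambda>y. u \<bullet> (mat_exp (y \<cdot>\<^sub>m A) *\<^sub>v v)) y"
  using DERIV_scalar_prod_mat_exp[OF assms] by (rule DERIV_isCont)

lemma mult_mat_vec_uminus:
  fixes A :: "'a::comm_ring_1 mat"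
  shows "A \<in> carrier_mat n m \<Longrightarrow> v \<in> carrier_vec m \<Longrightarrow> A *\<^sub>v (- v) = - (A *\<^sub>v v)"
  by (intro eq_vecI) (auto intro!: scalar_prod_uminus_right)

lemma ME_tripleE:
  assumes "ME_triple \<alpha> T t"
  obtains n where "\<alpha> \<in> carrier_vec n" "T \<in> carrier_mat n n" "t \<in> carrier_vec n"
    "\<forall>z::complex. eigenvalue (map_mat complex_of_real T) z \<longrightarrow> Re z < 0"
  using assms unfolding ME_triple_def by blast

lemma
  assumes T: "T \<in> carrier_mat n n" and t: "t \<in> carrier_vec n"
    and stable: "\<forall>z::complex. eigenvalue (map_mat complex_of_real T) z \<longrightarrow> Re z < 0"
  shows carrier_ME_l: "ME_l T t \<in> carrier_vec n" and mult_ME_l: "T *\<^sub>v ME_l T t = - t"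
proof -
  have "\<not> eigenvalue T 0"
    using stable of_real_hom.eigenvalue_hom[OF T, of 0] by auto
  moreover have "char_matrix T 0 = T"
    using T by (auto simp: char_matrix_def intro!: eq_matI)
  ultimately have "det (- T) \<noteq> 0"
    by (simp add: eigenvalue_det[OF T] det_0_negate[OF T])
  then have "- T \<in> Units (ring_mat TYPE(real) n ())"
    using T by (intro det_non_zero_imp_unit) auto
  then obtain B where "mat_inverse (- T) = Some B"
    using mat_inverse(1)[of "- T" n "()"] T by (cases "mat_inverse (- T)") auto
  then have B: "B \<in> carrier_mat n n" "- T * B = 1\<^sub>m n" and l: "ME_l T t = B *\<^sub>v t"
    using mat_inverse(2)[of "- T" n] T by (auto simp: ME_l_def)
  show "ME_l T t \<in> carrier_vec n" using B t l by simp
  have "T * B = - 1\<^sub>m n"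
    using B(2) T B by (simp, metis uminus_uminus_mat)
  then show "T *\<^sub>v ME_l T t = - t"
    using T B t by (simp add: l flip: assoc_mult_mat_vec)
qed

definition ME_surv :: "real vec \<Rightarrow> real mat \<Rightarrow> real vec \<Rightarrow> real \<Rightarrow> real" where
  "ME_surv \<alpha> T t y = \<alpha> \<bullet> (mat_exp (y \<cdot>\<^sub>m T) *\<^sub>v ME_l T t)"

lemma DERIV_ME_surv:
  assumes "ME_triple \<alpha> T t"
  shows "(ME_surv \<alpha> T t has_real_derivative - ME_fun \<alpha> T t y) (at y)"
proof -
  obtain n where \<alpha>: "\<alpha> \<in> carrier_vec n" and T: "T \<in> carrier_mat n n" and t: "t \<in> carrier_vec n"
    and stable: "\<forall>z::complex. eigenvalue (map_mat complex_of_real T) z \<longrightarrow> Re z < 0"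
    using assms by (rule ME_tripleE)
  have "\<alpha> \<bullet> (mat_exp (y \<cdot>\<^sub>m T) *\<^sub>v (T *\<^sub>v ME_l T t)) = \<alpha> \<bullet> - (mat_exp (y \<cdot>\<^sub>m T) *\<^sub>v t)"
    unfolding mult_ME_l[OF T t stable] mult_mat_vec_uminus[OF mat_exp_carrier[OF T] t] ..
  also have "\<dots> = - ME_fun \<alpha> T t y"
    unfolding ME_fun_def using carrier_vecD[OF \<alpha>] carrier_matD[OF mat_exp_carrier[OF T, of y]]
    by (intro scalar_prod_uminus_right) simp
  finally show ?thesis
    using DERIV_scalar_prod_mat_exp[OF T \<alpha> carrier_ME_l[OF T t stable], of y]
    by (simp add: ME_surv_def[abs_def])
qed

lemma ME_surv_tendsto_zero:
  assumes "ME_triple \<alpha> T t"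
  shows "(ME_surv \<alpha> T t \<longlongrightarrow> 0) at_top"
proof -
  obtain n where \<alpha>: "\<alpha> \<in> carrier_vec n" and T: "T \<in> carrier_mat n n" and t: "t \<in> carrier_vec n"
    and stable: "\<forall>z::complex. eigenvalue (map_mat complex_of_real T) z \<longrightarrow> Re z < 0"
    using assms by (rule ME_tripleE)
  have "((\<lambda>y. \<Sum>a<n. \<alpha> $ a * (\<Sum>b<n. mat_exp (y \<cdot>\<^sub>m T) $$ (a,b) * ME_l T t $ b))
      \<longlongrightarrow> (\<Sum>a<n. \<alpha> $ a * (\<Sum>b<n. 0 * ME_l T t $ b))) at_top"
    by (intro tendsto_intros mat_exp_smult_index_tendsto_zero[OF T stable]) auto
  then show ?thesis
    using carrier_ME_l[OF T t stable] \<alpha> T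
    by (simp add: ME_surv_def[abs_def] scalar_prod_mult_mat_vec_sum[OF mat_exp_carrier])
qed

lemma ME_fun_has_integral_atLeastAtMost:
  assumes ME: "ME_density \<alpha> T t" and z: "0 \<le> z"
  shows "(ME_fun \<alpha> T t has_integral 1 - ME_surv \<alpha> T t z) {0..z}"
proof -
  have triple: "ME_triple \<alpha> T t" and nonneg: "\<And>x. 0 \<le> x \<Longrightarrow> 0 \<le> ME_fun \<alpha> T t x"
    and total: "(ME_fun \<alpha> T t has_integral 1) {0..}"
    using ME unfolding ME_density_def by auto
  have FTC: "(ME_fun \<alpha> T t has_integral ME_surv \<alpha> T t 0 - ME_surv \<alpha> T t z) {0..z}"
    if "0 \<le> z" for z
    using fundamental_theorem_of_calculus[OF that, of "\<lambda>y. - ME_surv \<alpha> T t y"]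
      DERIV_minus[OF DERIV_ME_surv[OF triple]]
    by (simp add: has_real_derivative_iff_has_vector_derivative[symmetric] has_field_derivative_at_within)
  define f where "f k x = (if x \<in> {0..real k} then ME_fun \<alpha> T t x else 0)" for k :: nat and x
  have "(ME_fun \<alpha> T t has_integral ME_surv \<alpha> T t 0) {0..}"
  proof (rule has_integral_dominated_convergence)
    show "(f k has_integral ME_surv \<alpha> T t 0 - ME_surv \<alpha> T t (real k)) {0..}" for k
      unfolding f_def by (subst has_integral_restrict) (auto intro: FTC)
    show "ME_fun \<alpha> T t integrable_on {0..}" using total by blast
    show "\<forall>x\<in>{0..}. norm (f k x) \<le> ME_fun \<alpha> T t x" for k
      using nonneg by (auto simp: f_def)
    show "\<forall>x\<in>{0..}. (\<lambda>k. f k x) \<longlonglongrightarrow> ME_fun \<alpha> T t x"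
    proof
      fix x :: real assume "x \<in> {0..}"
      obtain N :: nat where "x \<le> real N" using real_arch_simple by blast
      with \<open>x \<in> {0..}\<close> have "\<forall>\<^sub>F k in sequentially. f k x = ME_fun \<alpha> T t x"
        unfolding f_def eventually_sequentially by (intro exI[of _ N]) auto
      then show "(\<lambda>k. f k x) \<longlonglongrightarrow> ME_fun \<alpha> T t x"
        by (rule tendsto_eventually)
    qed
    show "(\<lambda>k. ME_surv \<alpha> T t 0 - ME_surv \<alpha> T t (real k)) \<longlonglongrightarrow> ME_surv \<alpha> T t 0"
      using tendsto_diff[OF tendsto_const
          filterlim_compose[OF ME_surv_tendsto_zero[OF triple] filterlim_real_sequentially]]
      by simp
  qed
  then have "ME_surv \<alpha> T t 0 = 1"
    using total by (rule has_integral_unique)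
  with FTC[OF z] show ?thesis by simp
qed

lemma
  fixes f :: "real \<Rightarrow> real"
  assumes f: "(f has_integral c) S" and nonneg: "\<And>x. x \<in> S \<Longrightarrow> 0 \<le> f x"
    and S: "S \<in> sets borel" and f_meas: "f \<in> borel_measurable borel"
  shows integrable_lborel_of_has_integral_nonneg: "integrable lborel (\<lambda>x. indicator S x * f x)"
    and integral_lborel_of_has_integral_nonneg: "integral\<^sup>L lborel (\<lambda>x. indicator S x * f x) = c"
proof -
  have lebesgue: "set_integrable lebesgue S f"
    using nonnegative_absolutely_integrable_1[of f S] f nonneg by blast
  have meas: "(\<lambda>x. indicator S x * f x) \<in> borel_measurable lborel"
    using S f_meas by measurable
  from lebesgue show "integrable lborel (\<lambda>x. indicator S x * f x)"
    unfolding set_integrable_def using integrable_completion[OF meas] by simp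
  have "(LINT x:S | lebesgue. f x) = c"
    using set_lebesgue_integral_eq_integral(2)[OF lebesgue] integral_unique[OF f] by simp
  then show "integral\<^sup>L lborel (\<lambda>x. indicator S x * f x) = c"
    unfolding set_lebesgue_integral_def using integral_completion[OF meas] by simp
qed

lemma borel_measurable_ME_fun:
  assumes "ME_triple \<alpha> T t"
  shows "ME_fun \<alpha> T t \<in> borel_measurable borel"
proof -
  obtain n where "\<alpha> \<in> carrier_vec n" "T \<in> carrier_mat n n" "t \<in> carrier_vec n"
    using assms by (rule ME_tripleE)
  then show ?thesis
    unfolding ME_fun_def[abs_def]
    by (intro borel_measurable_continuous_onI continuous_at_imp_continuous_on ballI
        isCont_scalar_prod_mat_exp)
qed

lemma
  assumes ME: "ME_density \<alpha> T t" and z: "0 \<le> z"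
  shows integrable_lborel_ME_fun_atLeastAtMost:
      "integrable lborel (\<lambda>s. indicator {0..z} s * ME_fun \<alpha> T t s)"
    and integral_lborel_ME_fun_atLeastAtMost:
      "integral\<^sup>L lborel (\<lambda>s. indicator {0..z} s * ME_fun \<alpha> T t s) = 1 - ME_surv \<alpha> T t z"
  using ME_fun_has_integral_atLeastAtMost[OF ME z] ME borel_measurable_ME_fun
  by (auto simp: ME_density_def intro!: integrable_lborel_of_has_integral_nonneg
      integral_lborel_of_has_integral_nonneg)

lemma
  assumes ME: "ME_density \<alpha> T t"
  shows integrable_lborel_ME_fun_atLeast:
      "integrable lborel (\<lambda>s. indicator {0..} s * ME_fun \<alpha> T t s)"
    and integral_lborel_ME_fun_atLeast:
      "integral\<^sup>L lborel (\<lambda>s. indicator {0..} s * ME_fun \<alpha> T t s) = 1"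
  using ME borel_measurable_ME_fun
  by (auto simp: ME_density_def intro!: integrable_lborel_of_has_integral_nonneg
      integral_lborel_of_has_integral_nonneg)


section \<open>The matrix Laplace transform\<close>

lemma bounded_atLeast_of_tendsto:
  fixes f :: "real \<Rightarrow> real"
  assumes cont: "continuous_on {a..} f" and lim: "(f \<longlongrightarrow> c) at_top"
  obtains C where "\<And>y. a \<le> y \<Longrightarrow> \<bar>f y\<bar> \<le> C"
proof -
  obtain Y where Y: "\<And>y. Y \<le> y \<Longrightarrow> dist (f y) c < 1"
    using tendstoD[OF lim, of 1] by (auto simp: eventually_at_top_linorder)
  have "bounded (f ` {a..Y})"
    by (intro compact_imp_bounded compact_continuous_image continuous_on_subset[OF cont]) auto
  then obtain C where C: "\<forall>z\<in>f ` {a..Y}. norm z \<le> C"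
    unfolding bounded_iff by blast
  have "\<bar>f y\<bar> \<le> max C (\<bar>c\<bar> + 1)" if "a \<le> y" for y
  proof (cases "y \<le> Y")
    case True
    then have "\<bar>f y\<bar> \<le> C" using C that by auto
    then show ?thesis by linarith
  next
    case False
    then show ?thesis using Y[of y] by (auto simp: dist_real_def)
  qed
  then show ?thesis by (rule that)
qed

lemma scalar_prod_mat_laplace:
  fixes N :: "real measure"
  assumes T: "T \<in> carrier_mat n n" and u: "u \<in> carrier_vec n" and v: "v \<in> carrier_vec n"
    and stable: "\<forall>z::complex. eigenvalue (map_mat complex_of_real T) z \<longrightarrow> Re z < 0"
    and x: "0 \<le> x" and N: "prob_space N" and sets_N: "sets N = sets borel"
    and nonneg: "AE r in N. 0 \<le> r"
  shows "integrable N (\<lambda>r. u \<bullet> (mat_exp ((x * r) \<cdot>\<^sub>m T) *\<^sub>v v))"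
    and "u \<bullet> (mat_laplace N (- (x \<cdot>\<^sub>m T)) *\<^sub>v v) = (\<integral>r. u \<bullet> (mat_exp ((x * r) \<cdot>\<^sub>m T) *\<^sub>v v) \<partial>N)"
proof -
  interpret N: prob_space N by (rule N)
  define E where "E r a b = mat_exp ((x * r) \<cdot>\<^sub>m T) $$ (a,b)" for r a b
  have E_integrable: "integrable N (\<lambda>r. E r a b)" if ab: "a < n" "b < n" for a b
  proof -
    have cont: "continuous_on UNIV (\<lambda>r. E r a b)"
      unfolding E_def
      by (intro continuous_at_imp_continuous_on ballI continuous_at_compose[of _ "\<lambda>r. x * r",
          unfolded comp_def, OF _ DERIV_isCont[OF DERIV_mat_exp_smult_index[OF T ab]]])
        (auto intro!: continuous_intros)
    have "continuous_on {0..} (\<lambda>y. mat_exp (y \<cdot>\<^sub>m T) $$ (a,b))"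
      by (intro continuous_at_imp_continuous_on ballI DERIV_isCont[OF DERIV_mat_exp_smult_index[OF T ab]])
    then obtain C where C: "\<And>y. 0 \<le> y \<Longrightarrow> \<bar>mat_exp (y \<cdot>\<^sub>m T) $$ (a,b)\<bar> \<le> C"
      using bounded_atLeast_of_tendsto[OF _ mat_exp_smult_index_tendsto_zero[OF T stable ab]] by blast
    show ?thesis
    proof (rule N.integrable_const_bound[where B=C])
      show "AE r in N. norm (E r a b) \<le> C"
        using nonneg by eventually_elim (use x C in \<open>simp add: E_def\<close>)
      show "(\<lambda>r. E r a b) \<in> borel_measurable N"
        using borel_measurable_continuous_onI[OF cont] measurable_cong_sets[OF sets_N refl] by blast
    qed
  qed
  have expand: "u \<bullet> (mat_exp ((x * r) \<cdot>\<^sub>m T) *\<^sub>v v) = (\<Sum>a<n. u $ a * (\<Sum>b<n. E r a b * v $ b))" for r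
    unfolding E_def using scalar_prod_mult_mat_vec_sum[OF mat_exp_carrier[OF T] u v] .
  show "integrable N (\<lambda>r. u \<bullet> (mat_exp ((x * r) \<cdot>\<^sub>m T) *\<^sub>v v))"
    unfolding expand by (intro Bochner_Integration.integrable_sum integrable_mult_right
        integrable_mult_left E_integrable) auto
  have laplace: "mat_laplace N (- (x \<cdot>\<^sub>m T)) $$ (a,b) = (\<integral>r. E r a b \<partial>N)" if "a < n" "b < n" for a b
  proof -
    have "(- r) \<cdot>\<^sub>m (- (x \<cdot>\<^sub>m T)) = (x * r) \<cdot>\<^sub>m T" for r
      by (intro eq_matI) auto
    then show ?thesis using that T by (simp add: mat_laplace_def E_def)
  qed
  have row_integrable: "integrable N (\<lambda>r. \<Sum>b<n. E r a b * v $ b)" if "a < n" for a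
    using that by (intro Bochner_Integration.integrable_sum integrable_mult_left E_integrable) auto
  have laplace_carrier: "mat_laplace N (- (x \<cdot>\<^sub>m T)) \<in> carrier_mat n n"
    using T by (simp add: mat_laplace_def)
  have "u \<bullet> (mat_laplace N (- (x \<cdot>\<^sub>m T)) *\<^sub>v v)
      = (\<Sum>a<n. u $ a * (\<Sum>b<n. (\<integral>r. E r a b \<partial>N) * v $ b))"
    unfolding scalar_prod_mult_mat_vec_sum[OF laplace_carrier u v] by (auto simp: laplace intro!: sum.cong)
  also have "\<dots> = (\<Sum>a<n. u $ a * (\<integral>r. (\<Sum>b<n. E r a b * v $ b) \<partial>N))"
    by (intro sum.cong refl arg_cong[where f="\<lambda>z. u $ _ * z"], subst Bochner_Integration.integral_sum)
      (auto intro!: integrable_mult_left E_integrable)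
  also have "\<dots> = (\<integral>r. (\<Sum>a<n. u $ a * (\<Sum>b<n. E r a b * v $ b)) \<partial>N)"
    by (subst Bochner_Integration.integral_sum) (auto intro!: integrable_mult_right row_integrable)
  finally show "u \<bullet> (mat_laplace N (- (x \<cdot>\<^sub>m T)) *\<^sub>v v) = (\<integral>r. u \<bullet> (mat_exp ((x * r) \<cdot>\<^sub>m T) *\<^sub>v v) \<partial>N)"
    unfolding expand .
qed

lemma
  fixes N :: "real measure"
  assumes ME: "ME_triple \<alpha> T t" and x: "0 \<le> x" and N: "prob_space N"
    and sets_N: "sets N = sets borel" and nonneg: "AE r in N. 0 \<le> r"
  shows integrable_ME_surv: "integrable N (\<lambda>r. ME_surv \<alpha> T t (x * r))"
    and scalar_prod_mat_laplace_ME_l: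
      "\<alpha> \<bullet> (mat_laplace N (- (x \<cdot>\<^sub>m T)) *\<^sub>v ME_l T t) = (\<integral>r. ME_surv \<alpha> T t (x * r) \<partial>N)"
proof -
  obtain n where \<alpha>: "\<alpha> \<in> carrier_vec n" and T: "T \<in> carrier_mat n n" and t: "t \<in> carrier_vec n"
    and stable: "\<forall>z::complex. eigenvalue (map_mat complex_of_real T) z \<longrightarrow> Re z < 0"
    using ME by (rule ME_tripleE)
  note laplace = scalar_prod_mat_laplace[OF T \<alpha> carrier_ME_l[OF T t stable] stable x N sets_N nonneg]
  show "integrable N (\<lambda>r. ME_surv \<alpha> T t (x * r))"
    using laplace(1) by (simp add: ME_surv_def)
  show "\<alpha> \<bullet> (mat_laplace N (- (x \<cdot>\<^sub>m T)) *\<^sub>v ME_l T t) = (\<integral>r. ME_surv \<alpha> T t (x * r) \<partial>N)"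
    using laplace(2) by (simp add: ME_surv_def)
qed


section \<open>Marginal distribution functions of MMEam densities\<close>

lemma vec_nth_sum_Basis:
  fixes f :: "(real^'m::finite) \<Rightarrow> real"
  shows "(\<Sum>b\<in>Basis. f b *\<^sub>R b) $ k = f (axis k 1)"
  by (subst cart_eq_inner_axis) (rule inner_sum_left_Basis, simp)

lemma
  fixes \<phi> :: "'m::finite \<Rightarrow> real \<Rightarrow> real"
  assumes integrable: "\<And>k. integrable lborel (\<phi> k)"
  shows integrable_lborel_vec_prod: "integrable lborel (\<lambda>y::real^'m. \<Prod>k\<in>UNIV. \<phi> k (y $ k))"
    and integral_lborel_vec_prod:
      "(\<integral>y. (\<Prod>k\<in>UNIV. \<phi> k (y $ k)) \<partial>(lborel :: (real^'m) measure)) = (\<Prod>k\<in>UNIV. integral\<^sup>L lborel (\<phi> k))"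
proof -
  \<comment> \<open>Transport the product measure on \<open>Basis \<rightarrow> \<real>\<close> to \<open>real^'m\<close> along \<open>lborel_eq\<close>.\<close>
  define ax where "ax k = (axis k 1 :: real^'m)" for k
  have inj: "inj ax" by (auto simp: ax_def inj_def axis_eq_axis)
  have Basis: "(Basis :: (real^'m) set) = range ax" by (auto simp: ax_def Basis_vec_def)
  define \<phi>' where "\<phi>' b = \<phi> (inv_into UNIV ax b)" for b
  define sf where "sf f = (\<Sum>b\<in>(Basis::(real^'m) set). f b *\<^sub>R b)" for f
  have psf: "product_sigma_finite (\<lambda>_::real^'m. lborel :: real measure)"
    by (simp add: product_sigma_finite_def sigma_finite_lborel)
  have prod_sf: "(\<Prod>k\<in>UNIV. \<phi> k (sf f $ k)) = (\<Prod>b\<in>Basis. \<phi>' b (f b))" for f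
    unfolding sf_def vec_nth_sum_Basis unfolding Basis \<phi>'_def
    by (simp add: prod.reindex[OF inj] ax_def[symmetric] inv_into_f_f[OF inj UNIV_I])
  have lborel: "lborel = distr (\<Pi>\<^sub>M b\<in>Basis. lborel) borel sf"
    unfolding sf_def by (rule lborel_eq)
  have sf: "sf \<in> borel_measurable (\<Pi>\<^sub>M b\<in>Basis. lborel)"
    unfolding sf_def by measurable
  have meas: "(\<lambda>y::real^'m. \<Prod>k\<in>UNIV. \<phi> k (y $ k)) \<in> borel_measurable borel"
    using integrable by measurable
  have product: "integrable (\<Pi>\<^sub>M b\<in>Basis. lborel) (\<lambda>f. \<Prod>b\<in>Basis. \<phi>' b (f b))"
    by (rule product_sigma_finite.product_integrable_prod[OF psf]) (auto simp: \<phi>'_def integrable)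
  show "integrable lborel (\<lambda>y::real^'m. \<Prod>k\<in>UNIV. \<phi> k (y $ k))"
    unfolding lborel using product meas sf by (subst integrable_distr_eq) (auto simp: prod_sf)
  have "(\<integral>y. (\<Prod>k\<in>UNIV. \<phi> k (y $ k)) \<partial>(lborel :: (real^'m) measure))
      = (\<integral>f. (\<Prod>b\<in>Basis. \<phi>' b (f b)) \<partial>(\<Pi>\<^sub>M b\<in>Basis. lborel))"
    unfolding lborel using meas sf by (subst integral_distr) (auto simp: prod_sf)
  also have "\<dots> = (\<Prod>b\<in>Basis. integral\<^sup>L lborel (\<phi>' b))"
    by (rule product_sigma_finite.product_integral_prod[OF psf]) (auto simp: \<phi>'_def integrable)
  also have "\<dots> = (\<Prod>k\<in>UNIV. integral\<^sup>L lborel (\<phi> k))"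
    unfolding Basis \<phi>'_def by (simp add: prod.reindex[OF inj] inv_into_f_f[OF inj UNIV_I])
  finally show "(\<integral>y. (\<Prod>k\<in>UNIV. \<phi> k (y $ k)) \<partial>(lborel :: (real^'m) measure))
      = (\<Prod>k\<in>UNIV. integral\<^sup>L lborel (\<phi> k))" .
qed

lemma
  fixes \<alpha> :: "'m::finite \<Rightarrow> real vec" and T :: "'m \<Rightarrow> real mat" and t :: "'m \<Rightarrow> real vec"
    and j :: 'm and z :: real
  assumes ME: "\<And>k. ME_density (\<alpha> k) (T k) (t k)" and z: "0 \<le> z"
  defines "I k \<equiv> if k = j then {0..z} else {0..}"
  shows integrable_lborel_prod_ME_fun:
      "integrable lborel (\<lambda>y::real^'m. \<Prod>k\<in>UNIV. indicator (I k) (y $ k) * ME_fun (\<alpha> k) (T k) (t k) (y $ k))"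
    and integral_lborel_prod_ME_fun:
      "(\<integral>y. (\<Prod>k\<in>UNIV. indicator (I k) (y $ k) * ME_fun (\<alpha> k) (T k) (t k) (y $ k)) \<partial>lborel)
        = 1 - ME_surv (\<alpha> j) (T j) (t j) z"
proof -
  have integrable: "integrable lborel (\<lambda>s. indicator (I k) s * ME_fun (\<alpha> k) (T k) (t k) s)" for k
    using integrable_lborel_ME_fun_atLeastAtMost[OF ME z] integrable_lborel_ME_fun_atLeast[OF ME]
    by (simp add: I_def)
  then show "integrable lborel
      (\<lambda>y::real^'m. \<Prod>k\<in>UNIV. indicator (I k) (y $ k) * ME_fun (\<alpha> k) (T k) (t k) (y $ k))"
    by (rule integrable_lborel_vec_prod)
  have "integral\<^sup>L lborel (\<lambda>s. indicator (I k) s * ME_fun (\<alpha> k) (T k) (t k) s)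
      = (if k = j then 1 - ME_surv (\<alpha> j) (T j) (t j) z else 1)" for k
    using integral_lborel_ME_fun_atLeastAtMost[OF ME z] integral_lborel_ME_fun_atLeast[OF ME]
    by (simp add: I_def)
  then show "(\<integral>y. (\<Prod>k\<in>UNIV. indicator (I k) (y $ k) * ME_fun (\<alpha> k) (T k) (t k) (y $ k)) \<partial>lborel)
      = 1 - ME_surv (\<alpha> j) (T j) (t j) z"
    by (subst integral_lborel_vec_prod[OF integrable]) (simp add: prod.delta)
qed

definition MMEam_cdf :: "nat \<Rightarrow> (nat \<Rightarrow> real vec) \<Rightarrow> (nat \<Rightarrow> real mat) \<Rightarrow> (nat \<Rightarrow> real vec)
    \<Rightarrow> (('m::finite \<Rightarrow> nat) \<Rightarrow> real) \<Rightarrow> 'm \<Rightarrow> real \<Rightarrow> real" where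
  "MMEam_cdf L \<alpha> T t p j z = (\<Sum>i\<in>idx_set L. p i * (1 - ME_surv (\<alpha> (i j)) (T (i j)) (t (i j)) z))"

lemma idx_set_mem: "i \<in> idx_set L \<Longrightarrow> i k \<in> {1..L}"
  unfolding idx_set_def by (auto simp: PiE_def)

lemma prod_indicator_eq_if:
  assumes "finite I"
  shows "(\<Prod>i\<in>I. indicator (A i) (x i) :: 'a::comm_semiring_1) = (if \<forall>i\<in>I. x i \<in> A i then 1 else 0)"
  using assms by (induction I rule: finite_induct) (auto simp: indicator_def)

lemma indicator_orthant_vec_nth_le:
  "indicator orthant y * indicator {y. y $ j \<le> z} y
     = (\<Prod>k\<in>UNIV. indicator (if k = j then {0..z} else {0..}) (y $ k) :: real)"
proof -
  have "(\<forall>k\<in>UNIV. y $ k \<in> (if k = j then {0..z} else {0..})) \<longleftrightarrow> y \<in> orthant \<and> y $ j \<le> z"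
    by (auto simp: orthant_def)
  then show ?thesis
    unfolding prod_indicator_eq_if[OF finite] by (simp add: indicator_def)
qed

lemma MMEam_fun_indicator_vec_nth_le:
  "indicator orthant y * MMEam_fun L \<alpha> T t p y * indicator {y. y $ j \<le> z} y
    = (\<Sum>i\<in>idx_set L. p i * (\<Prod>k\<in>UNIV. indicator (if k = j then {0..z} else {0..}) (y $ k) *
        ME_fun (\<alpha> (i k)) (T (i k)) (t (i k)) (y $ k)))"
proof -
  have "indicator orthant y * MMEam_fun L \<alpha> T t p y * indicator {y. y $ j \<le> z} y
      = (indicator orthant y * indicator {y. y $ j \<le> z} y) * MMEam_fun L \<alpha> T t p y"
    by (simp only: ac_simps)
  also have "\<dots> = (\<Prod>k\<in>UNIV. indicator (if k = j then {0..z} else {0..}) (y $ k))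
      * MMEam_fun L \<alpha> T t p y"
    unfolding indicator_orthant_vec_nth_le ..
  finally show ?thesis
    by (simp add: MMEam_fun_def prod.distrib sum_distrib_left ac_simps)
qed

lemma
  fixes j :: "'m::finite" and p :: "('m \<Rightarrow> nat) \<Rightarrow> real"
  assumes ME: "\<forall>k\<in>{1..L}. ME_density (\<alpha> k) (T k) (t k)" and z: "0 \<le> z"
  defines "D y \<equiv> indicator orthant y * MMEam_fun L \<alpha> T t p y * indicator {y. y $ j \<le> z} y"
  shows integrable_lborel_MMEam_fun_vec_nth_le: "integrable lborel D"
    and integral_lborel_MMEam_fun_vec_nth_le: "integral\<^sup>L lborel D = MMEam_cdf L \<alpha> T t p j z"
proof -
  have ME_i: "ME_density (\<alpha> (i k)) (T (i k)) (t (i k))" if "i \<in> idx_set L" for i k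
    using ME idx_set_mem[OF that] by blast
  note integrable = integrable_lborel_prod_ME_fun[where j = j, OF ME_i z]
  show "integrable lborel D"
    unfolding D_def MMEam_fun_indicator_vec_nth_le
    by (intro Bochner_Integration.integrable_sum integrable_mult_right integrable)
  have "integral\<^sup>L lborel D = (\<Sum>i\<in>idx_set L. \<integral>y. p i *
      (\<Prod>k\<in>UNIV. indicator (if k = j then {0..z} else {0..}) (y $ k) *
        ME_fun (\<alpha> (i k)) (T (i k)) (t (i k)) (y $ k)) \<partial>lborel)"
    unfolding D_def MMEam_fun_indicator_vec_nth_le
    by (rule Bochner_Integration.integral_sum) (intro ballI integrable_mult_right integrable)
  also have "\<dots> = MMEam_cdf L \<alpha> T t p j z"
    unfolding MMEam_cdf_def
  proof (intro sum.cong refl)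
    fix i :: "'m \<Rightarrow> nat" assume "i \<in> idx_set L"
    from integral_lborel_prod_ME_fun[where j = j, OF ME_i[OF this] z] show "(\<integral>y. p i *
        (\<Prod>k\<in>UNIV. indicator (if k = j then {0..z} else {0..}) (y $ k) *
          ME_fun (\<alpha> (i k)) (T (i k)) (t (i k)) (y $ k)) \<partial>lborel)
      = p i * (1 - ME_surv (\<alpha> (i j)) (T (i j)) (t (i j)) z)"
      by simp
  qed
  finally show "integral\<^sup>L lborel D = MMEam_cdf L \<alpha> T t p j z" .
qed

lemma
  fixes X :: "'a \<Rightarrow> real^'m::finite"
  assumes ME: "\<forall>k\<in>{1..L}. ME_density (\<alpha> k) (T k) (t k)"
    and nonneg: "\<forall>y\<in>orthant. MMEam_fun L \<alpha> T t p y \<ge> 0"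
    and X: "distributed M lborel X (\<lambda>y. ennreal (indicator orthant y * MMEam_fun L \<alpha> T t p y))"
    and z: "0 \<le> z"
  shows emeasure_MMEam_marginal_le: "emeasure M {\<omega>\<in>space M. X \<omega> $ j \<le> z} = ennreal (MMEam_cdf L \<alpha> T t p j z)"
    and MMEam_cdf_nonneg: "0 \<le> MMEam_cdf L \<alpha> T t p j z"
proof -
  define D where "D y = indicator orthant y * MMEam_fun L \<alpha> T t p y * indicator {y. y $ j \<le> z} y" for y
  have D_nonneg: "0 \<le> D y" for y
    using nonneg by (simp add: D_def indicator_def)
  have "emeasure M {\<omega>\<in>space M. X \<omega> $ j \<le> z} = emeasure M (X -` {y. y $ j \<le> z} \<inter> space M)"
    by (auto intro!: arg_cong[where f="emeasure M"])
  also have "\<dots> = (\<integral>\<^sup>+y. ennreal (indicator orthant y * MMEam_fun L \<alpha> T t p y) *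
      indicator {y. y $ j \<le> z} y \<partial>lborel)"
    by (rule distributed_emeasure[OF X]) simp
  also have "\<dots> = (\<integral>\<^sup>+y. ennreal (D y) \<partial>lborel)"
    by (intro nn_integral_cong) (simp add: D_def indicator_def)
  also have "\<dots> = ennreal (integral\<^sup>L lborel D)"
    using integrable_lborel_MMEam_fun_vec_nth_le[OF ME z, of p j] D_nonneg
    by (intro nn_integral_eq_integral) (auto simp: D_def[abs_def])
  also have "\<dots> = ennreal (MMEam_cdf L \<alpha> T t p j z)"
    unfolding D_def[abs_def] integral_lborel_MMEam_fun_vec_nth_le[OF ME z] ..
  finally show "emeasure M {\<omega>\<in>space M. X \<omega> $ j \<le> z} = ennreal (MMEam_cdf L \<alpha> T t p j z)" .
  show "0 \<le> MMEam_cdf L \<alpha> T t p j z"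
    using integral_nonneg_AE[of D lborel] D_nonneg
    unfolding D_def[abs_def] integral_lborel_MMEam_fun_vec_nth_le[OF ME z] by simp
qed

lemma
  fixes N :: "real measure" and j :: "'m::finite"
  assumes ME: "\<forall>k\<in>{1..L}. ME_density (\<alpha> k) (T k) (t k)"
    and psum: "(\<Sum>i\<in>idx_set L. p i) = 1"
    and x: "0 \<le> x" and N: "prob_space N" and sets_N: "sets N = sets borel"
    and nonneg: "AE r in N. 0 \<le> r"
  shows integrable_MMEam_cdf: "integrable N (\<lambda>r. MMEam_cdf L \<alpha> T t p j (x * r))"
    and integral_MMEam_cdf: "(\<integral>r. MMEam_cdf L \<alpha> T t p j (x * r) \<partial>N) = 1 - (\<Sum>i\<in>idx_set L. p i *
      (\<alpha> (i j) \<bullet> (mat_laplace N (- (x \<cdot>\<^sub>m T (i j))) *\<^sub>v ME_l (T (i j)) (t (i j)))))"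
proof -
  interpret N: prob_space N by (rule N)
  have ME_i: "ME_triple (\<alpha> (i j)) (T (i j)) (t (i j))" if "i \<in> idx_set L" for i
    using ME idx_set_mem[OF that] by (auto simp: ME_density_def)
  note integrable = integrable_ME_surv[OF ME_i x N sets_N nonneg]
  note laplace = scalar_prod_mat_laplace_ME_l[OF ME_i x N sets_N nonneg]
  show "integrable N (\<lambda>r. MMEam_cdf L \<alpha> T t p j (x * r))"
    unfolding MMEam_cdf_def by (auto intro!: integrable integrable_mult_right)
  have integral_1_minus: "(\<integral>r. 1 - ME_surv (\<alpha> (i j)) (T (i j)) (t (i j)) (x * r) \<partial>N)
      = 1 - (\<integral>r. ME_surv (\<alpha> (i j)) (T (i j)) (t (i j)) (x * r) \<partial>N)" if "i \<in> idx_set L" for i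
    using integrable[OF that] by (subst Bochner_Integration.integral_diff) (auto simp: N.prob_space)
  have "(\<integral>r. MMEam_cdf L \<alpha> T t p j (x * r) \<partial>N)
      = (\<Sum>i\<in>idx_set L. p i * (1 - (\<integral>r. ME_surv (\<alpha> (i j)) (T (i j)) (t (i j)) (x * r) \<partial>N)))"
    unfolding MMEam_cdf_def
    by (subst Bochner_Integration.integral_sum)
      (auto intro!: sum.cong integrable integrable_mult_right simp: integral_1_minus)
  also have "\<dots> = 1 - (\<Sum>i\<in>idx_set L. p i *
      (\<alpha> (i j) \<bullet> (mat_laplace N (- (x \<cdot>\<^sub>m T (i j))) *\<^sub>v ME_l (T (i j)) (t (i j)))))"
    by (simp add: laplace right_diff_distrib sum_subtractf psum)
  finally show "(\<integral>r. MMEam_cdf L \<alpha> T t p j (x * r) \<partial>N) = 1 - (\<Sum>i\<in>idx_set L. p i *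
      (\<alpha> (i j) \<bullet> (mat_laplace N (- (x \<cdot>\<^sub>m T (i j))) *\<^sub>v ME_l (T (i j)) (t (i j)))))" .
qed


section \<open>Division by an independent positive variable\<close>

lemma sigma_sets_vimage_sets:
  assumes "Z \<in> measurable M N"
  shows "sigma_sets (space M) {Z -` A \<inter> space M | A. A \<in> sets N} = {Z -` A \<inter> space M | A. A \<in> sets N}"
  using sigma_sets_vimage_commute[of Z "space M" "space N" "sets N"] measurable_space[OF assms]
    sets.sigma_sets_eq[of N]
  by auto

lemma (in prob_space) indep_var_of_indep_set_vimage:
  assumes "indep_set {X -` A \<inter> space M | A. A \<in> sets S} {Y -` A \<inter> space M | A. A \<in> sets T}"
    and "random_variable S X" and "random_variable T Y"
  shows "indep_var S X T Y"
  using assms by (simp add: indep_var_eq sigma_sets_vimage_sets)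

lemma (in prob_space) indep_set_vimage_compose_right:
  assumes indep: "indep_set E {Y -` A \<inter> space M | A. A \<in> sets T}"
    and Y: "random_variable T Y" and f: "f \<in> measurable T U"
  shows "indep_set E {(\<lambda>\<omega>. f (Y \<omega>)) -` A \<inter> space M | A. A \<in> sets U}"
proof -
  have subset: "{(\<lambda>\<omega>. f (Y \<omega>)) -` A \<inter> space M | A. A \<in> sets U} \<subseteq> {Y -` A \<inter> space M | A. A \<in> sets T}"
  proof safe
    fix A assume "A \<in> sets U"
    then have "f -` A \<inter> space T \<in> sets T" by (rule measurable_sets[OF f])
    moreover have "(\<lambda>\<omega>. f (Y \<omega>)) -` A \<inter> space M = Y -` (f -` A \<inter> space T) \<inter> space M"
      using measurable_space[OF Y] by auto
    ultimately show "\<exists>B. (\<lambda>\<omega>. f (Y \<omega>)) -` A \<inter> space M = Y -` B \<inter> space M \<and> B \<in> sets T"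
      by blast
  qed
  from indep show ?thesis
    unfolding indep_set_def by (rule indep_sets_mono_sets) (use subset in \<open>auto split: bool.split\<close>)
qed

lemma (in prob_space) emeasure_div_le_of_indep_var:
  fixes B Y :: "'a \<Rightarrow> real"
  assumes indep: "indep_var borel B borel Y" and pos: "\<forall>\<omega>\<in>space M. 0 < B \<omega>"
  shows "emeasure M {\<omega>\<in>space M. Y \<omega> / B \<omega> \<le> x}
    = (\<integral>\<^sup>+r. emeasure M {\<omega>\<in>space M. Y \<omega> \<le> x * r} \<partial>distr M borel B)"
proof -
  have B: "random_variable borel B" and Y: "random_variable borel Y"
    using indep by (auto dest: indep_var_rv1 indep_var_rv2)
  interpret Y: prob_space "distr M borel Y" by (rule prob_space_distr[OF Y])
  define C where "C = {w :: real \<times> real. snd w / fst w \<le> x}"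
  have C: "C \<in> sets (borel \<Otimes>\<^sub>M borel)"
  proof -
    have "{w \<in> space (borel \<Otimes>\<^sub>M borel). snd w / fst w \<le> x} \<in> sets (borel \<Otimes>\<^sub>M (borel :: real measure))"
      by measurable
    then show ?thesis by (simp add: C_def space_pair_measure)
  qed
  have "emeasure M {\<omega>\<in>space M. Y \<omega> / B \<omega> \<le> x} = emeasure (distr M (borel \<Otimes>\<^sub>M borel) (\<lambda>\<omega>. (B \<omega>, Y \<omega>))) C"
    using B Y C by (subst emeasure_distr) (auto simp: C_def intro!: arg_cong[where f="emeasure M"])
  also have "\<dots> = emeasure (distr M borel B \<Otimes>\<^sub>M distr M borel Y) C"
    using indep by (simp add: indep_var_distribution_eq)
  also have "\<dots> = (\<integral>\<^sup>+r. emeasure (distr M borel Y) (Pair r -` C) \<partial>distr M borel B)"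
    using C by (intro Y.emeasure_pair_measure_alt) simp
  also have "\<dots> = (\<integral>\<^sup>+r. emeasure M {\<omega>\<in>space M. Y \<omega> \<le> x * r} \<partial>distr M borel B)"
  proof (rule nn_integral_cong_AE)
    have "AE r in distr M borel B. 0 < r"
      using pos B by (subst AE_distr_iff) auto
    then show "AE r in distr M borel B. emeasure (distr M borel Y) (Pair r -` C)
        = emeasure M {\<omega>\<in>space M. Y \<omega> \<le> x * r}"
    proof eventually_elim
      case (elim r)
      then have "Pair r -` C = {s. s \<le> x * r}"
        by (auto simp: C_def divide_le_eq mult.commute)
      then show ?case
        using Y by (subst emeasure_distr) (auto intro!: arg_cong[where f="emeasure M"])
    qed
  qed
  finally show ?thesis .
qed


theorem theorem13:
  fixes M :: "'a measure"
    and L :: nat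
    and \<alpha> :: "nat \<Rightarrow> real vec" and T :: "nat \<Rightarrow> real mat" and t :: "nat \<Rightarrow> real vec"
    and p :: "('m::finite \<Rightarrow> nat) \<Rightarrow> real"
    and X :: "'a \<Rightarrow> real^'m" and B :: "'a \<Rightarrow> real"
    and j :: 'm and x :: real
  assumes "prob_space M"
    and "L \<ge> 1"
    and ME: "\<forall>k\<in>{1..L}. ME_density (\<alpha> k) (T k) (t k)"
    and psum: "(\<Sum>i\<in>idx_set L. p i) = 1"
    and fnonneg: "\<forall>y\<in>orthant. MMEam_fun L \<alpha> T t p y \<ge> 0"
    and Xdist: "distributed M lborel X
                  (\<lambda>y. ennreal (indicator orthant y * MMEam_fun L \<alpha> T t p y))"
    and Bpos: "\<forall>\<omega>\<in>space M. B \<omega> > 0"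
    and Bmeas: "B \<in> borel_measurable M"
    and Xmeas: "X \<in> borel_measurable M"
    and indep: "prob_space.indep_set M {B -` A \<inter> space M | A. A \<in> sets (borel :: real measure)}
                                    {X -` A \<inter> space M | A. A \<in> sets (borel :: (real^'m) measure)}"
    and "x \<ge> 0"
  shows "measure M {\<omega>\<in>space M. X \<omega> $ j / B \<omega> \<le> x} =
    1 - (\<Sum>i\<in>idx_set L. p i * (\<alpha> (i j) \<bullet>
           (mat_laplace (distr M borel B) (- (x \<cdot>\<^sub>m T (i j))) *\<^sub>v ME_l (T (i j)) (t (i j)))))"
proof -
  interpret prob_space M by fact
  define \<mu>B where "\<mu>B = distr M borel B"
  have \<mu>B: "prob_space \<mu>B" "sets \<mu>B = sets borel" and B_nonneg: "AE r in \<mu>B. 0 \<le> r"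
    unfolding \<mu>B_def using Bmeas Bpos
    by (auto intro!: prob_space_distr AE_I2 less_imp_le simp: AE_distr_iff)
  have cdf_nonneg: "AE r in \<mu>B. 0 \<le> MMEam_cdf L \<alpha> T t p j (x * r)"
    using B_nonneg by eventually_elim (use \<open>x \<ge> 0\<close> in \<open>simp add: MMEam_cdf_nonneg[OF ME fnonneg Xdist]\<close>)
  have "indep_var borel B borel (\<lambda>\<omega>. X \<omega> $ j)"
    using indep_set_vimage_compose_right[OF indep Xmeas, of "\<lambda>y. y $ j" borel] Bmeas Xmeas
    by (intro indep_var_of_indep_set_vimage) (auto intro: measurable_compose[OF Xmeas])
  then have "emeasure M {\<omega>\<in>space M. X \<omega> $ j / B \<omega> \<le> x}
      = (\<integral>\<^sup>+r. emeasure M {\<omega>\<in>space M. X \<omega> $ j \<le> x * r} \<partial>\<mu>B)"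
    unfolding \<mu>B_def using Bpos by (rule emeasure_div_le_of_indep_var)
  also have "\<dots> = (\<integral>\<^sup>+r. ennreal (MMEam_cdf L \<alpha> T t p j (x * r)) \<partial>\<mu>B)"
    using B_nonneg \<open>x \<ge> 0\<close>
    by (auto intro!: nn_integral_cong_AE emeasure_MMEam_marginal_le[OF ME fnonneg Xdist])
  also have "\<dots> = ennreal (\<integral>r. MMEam_cdf L \<alpha> T t p j (x * r) \<partial>\<mu>B)"
    using integrable_MMEam_cdf[OF ME psum \<open>x \<ge> 0\<close> \<mu>B B_nonneg] cdf_nonneg
    by (rule nn_integral_eq_integral)
  finally show ?thesis
    using integral_MMEam_cdf[OF ME psum \<open>x \<ge> 0\<close> \<mu>B B_nonneg, of j] integral_nonneg_AE[OF cdf_nonneg]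
    by (simp add: measure_def \<mu>B_def)
qed

end
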